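(* Let $q$ be an odd prime with $q \neq 5$, and let $k$ be an integer with $2 \leq k \leq 31$ such that $p = kq+1$ is prime and $z(p) \mid \pi(q)$. Then $k = 2$; that is, $p = 2q+1$ and $q$ is a Sophie Germain prime.
   Context: $F_n$ denotes the $n$-th Fibonacci number ($F_0 = 0$, $F_1 = 1$). For a prime $p$, $z(p)$ (rank of apparition) is the least positive integer $k$ with $p \mid F_k$. $\pi(n)$ is the Pisano period, the least period of $(F_m \bmod n)_{m\ge0}$. A Sophie Germain prime is a prime $q$ with $2q+1$ prime. *)

theory Defs
  imports "HOL-Number_Theory.Fib" "HOL-Computational_Algebra.Primes"
begin

definition rank_app :: "nat \<Rightarrow> nat" where
  "rank_app n = (LEAST k. 0 < k \<and> n dvd fib k)"

definition pisano :: "nat \<Rightarrow> nat" where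
  "pisano n = (LEAST k. 0 < k \<and> (\<forall>m. fib (m + k) mod n = fib m mod n))"

end

theory Submission
  imports Defs "HOL-Number_Theory.Number_Theory"
begin

(* Write p = kq + 1 and d = z(p). Expanding (1 + \<surd>5)\<^sup>r binomially modulo a prime r \<noteq> 2, 5
   gives F\<^sub>r \<equiv> e and 2 F\<^sub>r\<^sub>+\<^sub>1 \<equiv> 1 + e with e = 5\<^bsup>(r-1)/2\<^esup> \<equiv> \<plusminus>1, so r divides F\<^sub>r\<^sub>-\<^sub>1 or F\<^sub>r\<^sub>+\<^sub>1.
   For r = p this gives d | kq or d | kq + 2; for r = q it gives \<pi>(q) | q - 1 or \<pi>(q) | 2(q + 1).
   As d | \<pi>(q), q does not divide d, and eliminating q leaves d | k, d | k + 2 or d | 2(k - 2);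
   hence p divides F\<^sub>m for one of these m \<le> 56 (for k = 2 the last one is m = 0, which says nothing).
   Since p and q are odd, k is even, and the factorisations of the finitely many F\<^sub>m involved
   contain no prime kq + 1 with q an odd prime. *)

section \<open>Fibonacci numbers modulo a prime\<close>

lemma sum_choose_Suc:
  fixes g :: "nat \<Rightarrow> nat"
  shows "(\<Sum>i\<le>Suc n. (Suc n choose i) * g i) =
         (\<Sum>i\<le>n. (n choose i) * g i) + (\<Sum>i\<le>n. (n choose i) * g (Suc i))"
proof -
  have shift: "(\<Sum>i\<le>Suc n. (m choose i) * g i) = g 0 + (\<Sum>i\<le>n. (m choose Suc i) * g (Suc i))"
    for m
    by (subst sum.atMost_Suc_shift) simp
  have "(\<Sum>i\<le>Suc n. (Suc n choose i) * g i)
      = g 0 + (\<Sum>i\<le>n. (n choose i) * g (Suc i)) + (\<Sum>i\<le>n. (n choose Suc i) * g (Suc i))"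
    unfolding shift by (simp add: sum.distrib distrib_right)
  moreover have "(\<Sum>i\<le>n. (n choose i) * g i) = (\<Sum>i\<le>Suc n. (n choose i) * g i)"
    by simp
  ultimately show ?thesis
    using shift[of n] by linarith
qed

lemma sum_choose_prime_cong:
  fixes g :: "nat \<Rightarrow> nat"
  assumes "prime q"
  shows "[(\<Sum>i\<le>q. (q choose i) * g i) = g 0 + g q] (mod q)"
proof -
  have q: "1 < q"
    using assms prime_gt_1_nat by blast
  have "{..q} = insert 0 (insert q {1..<q})"
    by auto
  then have "(\<Sum>i\<le>q. (q choose i) * g i) = g 0 + g q + (\<Sum>i\<in>{1..<q}. (q choose i) * g i)"
    using q by simp
  moreover have "q dvd (\<Sum>i\<in>{1..<q}. (q choose i) * g i)"
    using assms by (auto intro!: dvd_sum dvd_mult2 dvd_choose_prime)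
  ultimately show ?thesis
    by (auto simp: cong_def)
qed

definition lucas_weight :: "nat \<Rightarrow> nat"
  where "lucas_weight i = (if even i then 5 ^ (i div 2) else 0)"

definition fib_weight :: "nat \<Rightarrow> nat"
  where "fib_weight i = (if odd i then 5 ^ (i div 2) else 0)"

text \<open>By the binomial theorem, \<open>(1 + \<surd>5)\<^sup>n = binom_lucas n + binom_fib n * \<surd>5\<close>;
  comparing with Binet's formula, \<open>binom_fib n = 2\<^sup>n\<^sup>-\<^sup>1 F\<^sub>n\<close>.\<close>

definition binom_lucas :: "nat \<Rightarrow> nat"
  where "binom_lucas n = (\<Sum>i\<le>n. (n choose i) * lucas_weight i)"

definition binom_fib :: "nat \<Rightarrow> nat"
  where "binom_fib n = (\<Sum>i\<le>n. (n choose i) * fib_weight i)"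

lemma binom_lucas_Suc: "binom_lucas (Suc n) = binom_lucas n + 5 * binom_fib n"
proof -
  have "lucas_weight (Suc i) = 5 * fib_weight i" for i
    by (auto simp: lucas_weight_def fib_weight_def elim!: oddE)
  then show ?thesis
    unfolding binom_lucas_def binom_fib_def sum_choose_Suc
    by (simp add: sum_distrib_left mult.left_commute)
qed

lemma binom_fib_Suc: "binom_fib (Suc n) = binom_lucas n + binom_fib n"
proof -
  have "fib_weight (Suc i) = lucas_weight i" for i
    by (auto simp: lucas_weight_def fib_weight_def elim!: evenE)
  then show ?thesis
    unfolding binom_lucas_def binom_fib_def sum_choose_Suc
    by simp
qed

lemma binom_fib_lucas_eq_fib:
  "2 * binom_fib n = 2 ^ n * fib n \<and> binom_lucas n + binom_fib n = 2 ^ n * fib (Suc n)"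
proof (induction n)
  case 0
  then show ?case
    by (simp add: binom_lucas_def binom_fib_def lucas_weight_def fib_weight_def)
next
  case (Suc n)
  then show ?case
    by (simp add: binom_lucas_Suc binom_fib_Suc algebra_simps)
qed

lemma fib_prime_cong:
  fixes q :: nat
  assumes "prime q" "odd q"
  shows "[fib q = 5 ^ (q div 2)] (mod q)"
    and "[2 * fib (Suc q) = 1 + 5 ^ (q div 2)] (mod q)"
proof -
  have "2 < q"
    using assms prime_ge_2_nat[of q] by (cases "q = 2") auto
  then have "\<not> q dvd 2"
    by (auto dest: dvd_imp_le)
  have coprime: "coprime 2 q"
    using assms(2) by simp
  have "[2 ^ (q - 1) = 1] (mod q)"
    using assms(1) \<open>\<not> q dvd 2\<close> by (rule fermat_theorem)
  then have "[2 * 2 ^ (q - 1) = 2] (mod q)"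
    using cong_scalar_left by fastforce
  moreover have "2 * 2 ^ (q - 1) = (2::nat) ^ q"
    using \<open>2 < q\<close> by (simp add: power_eq_if)
  ultimately have fermat: "[2 ^ q = 2] (mod q)"
    by simp
  have binom_fib_q: "[binom_fib q = 5 ^ (q div 2)] (mod q)"
    using sum_choose_prime_cong[OF assms(1), of fib_weight] assms(2)
    by (simp add: binom_fib_def fib_weight_def)
  have "[binom_lucas q = 1] (mod q)"
    using sum_choose_prime_cong[OF assms(1), of lucas_weight] assms(2)
    by (simp add: binom_lucas_def lucas_weight_def)
  then have binom_lucas_fib_q: "[binom_lucas q + binom_fib q = 1 + 5 ^ (q div 2)] (mod q)"
    using binom_fib_q by (rule cong_add)
  have "[2 * fib q = 2 ^ q * fib q] (mod q)"
    using cong_mult[OF cong_sym[OF fermat] cong_refl] .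
  also have "2 ^ q * fib q = 2 * binom_fib q"
    using binom_fib_lucas_eq_fib by simp
  also have "[2 * binom_fib q = 2 * 5 ^ (q div 2)] (mod q)"
    using binom_fib_q by (rule cong_scalar_left)
  finally show "[fib q = 5 ^ (q div 2)] (mod q)"
    using cong_mult_lcancel_nat[OF coprime] by blast
  have "[2 * fib (Suc q) = 2 ^ q * fib (Suc q)] (mod q)"
    using cong_mult[OF cong_sym[OF fermat] cong_refl] .
  also have "2 ^ q * fib (Suc q) = binom_lucas q + binom_fib q"
    using binom_fib_lucas_eq_fib by simp
  finally show "[2 * fib (Suc q) = 1 + 5 ^ (q div 2)] (mod q)"
    using binom_lucas_fib_q by (rule cong_trans)
qed

lemma cong_square_eq_one_nat:
  fixes x q :: nat
  assumes "prime q" "[x\<^sup>2 = 1] (mod q)"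
  shows "[x = 1] (mod q) \<or> [x + 1 = 0] (mod q)"
proof -
  have "x \<noteq> 0"
  proof
    assume "x = 0"
    with assms(2) have "[1 = 0] (mod q)"
      by (simp add: cong_sym_eq)
    then have "q dvd 1"
      by (simp only: cong_0_iff)
    with assms(1) show False
      by simp
  qed
  then have "q dvd x\<^sup>2 - 1"
    using assms(2) by (simp add: cong_altdef_nat Suc_leI)
  also have "x\<^sup>2 - 1 = (x - 1) * (x + 1)"
    by (simp add: power2_eq_square algebra_simps)
  finally have "q dvd x - 1 \<or> q dvd x + 1"
    using assms(1) prime_dvd_mult_iff by blast
  then show ?thesis
    using \<open>x \<noteq> 0\<close> by (auto simp: cong_altdef_nat cong_0_iff)
qed

text \<open>The case distinction is on the Legendre symbol \<open>(5/q) \<equiv> 5\<^bsup>(q-1)/2\<^esup>\<close>.\<close>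

lemma prime_dvd_fib_pred_or_succ:
  fixes q :: nat
  assumes "prime q" "q \<noteq> 2" "q \<noteq> 5"
  shows "(q dvd fib (q - 1) \<and> [fib q = 1] (mod q)) \<or> (q dvd fib (q + 1) \<and> [(fib q)\<^sup>2 = 1] (mod q))"
proof -
  define e where "e = (5::nat) ^ (q div 2)"
  have "2 < q"
    using assms prime_ge_2_nat[of q] by linarith
  then have "odd q"
    using assms(1) prime_odd_nat by blast
  have coprime: "coprime 2 q"
    using \<open>odd q\<close> by (simp add: coprime_commute)
  have fib_q: "[fib q = e] (mod q)" and fib_Suc_q: "[2 * fib (Suc q) = 1 + e] (mod q)"
    unfolding e_def using fib_prime_cong[OF assms(1) \<open>odd q\<close>] by auto
  have "\<not> q dvd 5"
    using assms primes_dvd_imp_eq[of q 5] by auto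
  then have "[5 ^ (q - 1) = 1] (mod q)"
    using assms(1) by (intro fermat_theorem)
  moreover have "e\<^sup>2 = 5 ^ (q - 1)"
    using \<open>odd q\<close> by (auto simp: e_def power_mult[symmetric] elim!: oddE)
  ultimately have e_square: "[e\<^sup>2 = 1] (mod q)"
    by simp
  then have fib_q_square: "[(fib q)\<^sup>2 = 1] (mod q)"
    using cong_pow[OF fib_q, of 2] cong_trans by blast
  from cong_square_eq_one_nat[OF assms(1) e_square] show ?thesis
  proof
    assume e: "[e = 1] (mod q)"
    then have fib_q_1: "[fib q = 1] (mod q)"
      using fib_q cong_trans by blast
    have "[2 * fib (Suc q) = 2 * 1] (mod q)"
      using cong_trans[OF fib_Suc_q cong_add[OF cong_refl[of 1] e]] by (simp add: numeral_2_eq_2)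
    then have "[fib (Suc q) = 1] (mod q)"
      using cong_mult_lcancel_nat[OF coprime] by blast
    moreover have "fib (Suc q) = fib (q - 1) + fib q"
      using \<open>2 < q\<close> by (cases q rule: nat.exhaust) auto
    ultimately have "[fib (q - 1) + fib q = 0 + fib q] (mod q)"
      using fib_q_1 by (metis add_0 cong_sym cong_trans)
    then have "q dvd fib (q - 1)"
      using cong_add_rcancel_nat cong_0_iff by blast
    then show ?thesis
      using fib_q_1 by blast
  next
    assume e: "[e + 1 = 0] (mod q)"
    then have "[2 * fib (Suc q) = 2 * 0] (mod q)"
      using fib_Suc_q by (metis add.commute cong_trans mult_0_right)
    then have "[fib (Suc q) = 0] (mod q)"
      using cong_mult_lcancel_nat[OF coprime] by blast
    then have "q dvd fib (q + 1)"
      by (simp add: cong_0_iff)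
    then show ?thesis
      using fib_q_square by blast
  qed
qed

section \<open>Pisano period and rank of apparition\<close>

lemma pisano_dvd_period:
  fixes n N :: nat
  assumes "0 < N" and period: "\<And>m. [fib (m + N) = fib m] (mod n)"
  shows "pisano n dvd N"
proof -
  define P where "P = pisano n"
  have "\<exists>k. 0 < k \<and> (\<forall>m. fib (m + k) mod n = fib m mod n)"
    using assms by (auto simp: cong_def)
  then have "0 < P \<and> (\<forall>m. fib (m + P) mod n = fib m mod n)"
    unfolding P_def pisano_def by (rule LeastI_ex)
  then have P: "0 < P" "\<And>m. fib (m + P) mod n = fib m mod n"
    by blast+
  have multiple: "fib (m + j * P) mod n = fib m mod n" for j m
    by (induction j) (simp_all add: P(2) add.assoc[symmetric] add.commute[of P])
  define r where "r = N mod P"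
  have r_period: "fib (m + r) mod n = fib m mod n" for m
  proof -
    have "fib (m + r) mod n = fib (m + r + (N div P) * P) mod n"
      by (rule multiple[symmetric])
    also have "m + r + (N div P) * P = m + N"
      by (simp add: r_def)
    finally show ?thesis
      using period by (simp add: cong_def)
  qed
  have "r = 0"
  proof (rule ccontr)
    assume "r \<noteq> 0"
    then have "P \<le> r"
      unfolding P_def pisano_def using r_period by (intro Least_le) simp
    moreover have "r < P"
      using P(1) by (simp add: r_def)
    ultimately show False
      by simp
  qed
  then show ?thesis
    by (simp add: P_def r_def dvd_eq_mod_eq_0)
qed

lemma fib_add_cong:
  assumes "n dvd fib N"
  shows "[fib (m + N) = fib (Suc N) * fib m] (mod n)"
proof (cases m)
  case 0
  then show ?thesis
    using assms by (simp add: cong_0_iff)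
next
  case (Suc l)
  have "fib (m + N) = fib (Suc N) * fib m + fib N * fib l"
    using fib_add[of l N] Suc by simp
  moreover have "[fib (Suc N) * fib m + fib N * fib l = fib (Suc N) * fib m + 0] (mod n)"
    using assms by (intro cong_add cong_refl) (simp add: cong_0_iff)
  ultimately show ?thesis
    by simp
qed

lemma fib_add_mult_cong:
  assumes "n dvd fib N"
  shows "[fib (m + j * N) = fib (Suc N) ^ j * fib m] (mod n)"
proof (induction j)
  case 0
  then show ?case
    by simp
next
  case (Suc j)
  have "[fib (m + j * N + N) = fib (Suc N) * fib (m + j * N)] (mod n)"
    using assms by (rule fib_add_cong)
  also have "[fib (Suc N) * fib (m + j * N) = fib (Suc N) * (fib (Suc N) ^ j * fib m)] (mod n)"
    using Suc.IH by (rule cong_scalar_left)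
  finally show ?case
    by (simp add: add.assoc add.commute[of N] mult.assoc)
qed

lemma pisano_dvd_mult:
  assumes "0 < j" "0 < N" "n dvd fib N" "[fib (Suc N) ^ j = 1] (mod n)"
  shows "pisano n dvd j * N"
proof (rule pisano_dvd_period)
  show "0 < j * N"
    using assms by simp
  show "[fib (m + j * N) = fib m] (mod n)" for m
    using fib_add_mult_cong[OF assms(3), of m j] cong_scalar_right[OF assms(4), of "fib m"]
    by (auto intro: cong_trans)
qed

lemma pisano_prime_dvd:
  fixes q :: nat
  assumes "prime q" "q \<noteq> 2" "q \<noteq> 5"
  shows "pisano q dvd q - 1 \<or> pisano q dvd 2 * (q + 1)"
  using prime_dvd_fib_pred_or_succ[OF assms]
proof
  assume "q dvd fib (q - 1) \<and> [fib q = 1] (mod q)"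
  moreover have "2 < q"
    using assms prime_ge_2_nat[of q] by linarith
  ultimately have "pisano q dvd 1 * (q - 1)"
    by (intro pisano_dvd_mult) simp_all
  then show ?thesis
    by simp
next
  assume case_succ: "q dvd fib (q + 1) \<and> [(fib q)\<^sup>2 = 1] (mod q)"
  then have "[fib (q + 1) + fib q = 0 + fib q] (mod q)"
    by (intro cong_add) (simp_all add: cong_0_iff)
  then have "[fib (Suc (q + 1)) = fib q] (mod q)"
    by simp
  then have "[(fib (Suc (q + 1)))\<^sup>2 = 1] (mod q)"
    using case_succ cong_pow cong_trans by blast
  then show ?thesis
    using case_succ by (intro disjI2 pisano_dvd_mult) simp_all
qed

lemma rank_app_least:
  assumes "p dvd fib n" "0 < n"
  shows "0 < rank_app p" "p dvd fib (rank_app p)" "rank_app p \<le> n"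
proof -
  have "\<exists>k. 0 < k \<and> p dvd fib k"
    using assms by blast
  then have "0 < rank_app p \<and> p dvd fib (rank_app p)"
    unfolding rank_app_def by (rule LeastI_ex)
  then show "0 < rank_app p" "p dvd fib (rank_app p)"
    by blast+
  show "rank_app p \<le> n"
    unfolding rank_app_def using assms by (simp add: Least_le)
qed

lemma rank_app_dvd:
  assumes "p dvd fib n" "0 < n"
  shows "rank_app p dvd n"
proof -
  let ?g = "gcd (rank_app p) n"
  have "p dvd fib ?g"
    using rank_app_least(2)[OF assms] assms(1) by (simp add: fib_gcd)
  moreover have "0 < ?g"
    using assms(2) by simp
  ultimately have "rank_app p \<le> ?g"
    by (rule rank_app_least(3))
  then have "?g = rank_app p"
    using rank_app_least(1)[OF assms] by (simp add: dvd_imp_le antisym)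
  then show ?thesis
    by (metis gcd_dvd2)
qed

lemma fib_dvd_fib: "m dvd n \<Longrightarrow> fib m dvd fib n"
  by (metis fib_gcd gcd_nat.absorb_iff1 dvd_refl)

lemma rank_app_prime_dvd:
  fixes p :: nat
  assumes "prime p" "p \<noteq> 2" "p \<noteq> 5"
  shows "rank_app p dvd p - 1 \<or> rank_app p dvd p + 1"
proof -
  have "2 < p"
    using assms prime_ge_2_nat[of p] by linarith
  then show ?thesis
    using prime_dvd_fib_pred_or_succ[OF assms] rank_app_dvd by auto
qed

lemma prime_dvd_fib_rank_app:
  fixes p :: nat
  assumes "prime p" "p \<noteq> 2" "p \<noteq> 5"
  shows "p dvd fib (rank_app p)"
proof -
  have "2 < p"
    using assms prime_ge_2_nat[of p] by linarith
  then show ?thesis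
    using prime_dvd_fib_pred_or_succ[OF assms] rank_app_least(2) by auto
qed

lemma dvd_mult_prime_cases:
  fixes d k q :: nat
  assumes "prime q" "2 < q" "2 \<le> k"
    and rank: "d dvd k * q \<or> d dvd k * q + 2"
    and period: "d dvd q - 1 \<or> d dvd 2 * (q + 1)"
  shows "d dvd k \<or> d dvd k + 2 \<or> d dvd 2 * (k - 2)"
proof -
  have "\<not> q dvd d"
  proof
    assume "q dvd d"
    then have "q dvd q - 1 \<or> q dvd 2 * q + 2"
      using period dvd_trans by (auto simp: algebra_simps)
    then have "q dvd q - 1 \<or> q dvd 2"
      by (metis dvd_add_right_iff dvd_triv_right)
    then show False
      using assms(2) by (auto dest: dvd_imp_le)
  qed
  then have "coprime d q"
    using assms(1) prime_imp_coprime coprime_commute by blast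
  obtain j where j: "k = j + 2"
    using assms(3) le_Suc_ex by (metis add.commute)
  consider "d dvd k * q" | "d dvd k * q + 2" "d dvd q - 1" | "d dvd k * q + 2" "d dvd 2 * (q + 1)"
    using rank period by blast
  then show ?thesis
  proof cases
    case 1
    then show ?thesis
      using \<open>coprime d q\<close> coprime_dvd_mult_left_iff by blast
  next
    case 2
    have "k * q + 2 = k * (q - 1) + (k + 2)"
      using assms(2) by (cases q) (simp_all add: algebra_simps)
    then have "d dvd k + 2"
      using 2 by (metis dvd_add_right_iff dvd_mult)
    then show ?thesis
      by blast
  next
    case 3
    have "k * (2 * (q + 1)) = 2 * (k * q + 2) + 2 * (k - 2)"
      using j by (simp add: algebra_simps)
    then have "d dvd 2 * (k - 2)"
      using 3 by (metis dvd_add_right_iff dvd_mult)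
    then show ?thesis
      by blast
  qed
qed

section \<open>Factorisations of small Fibonacci numbers\<close>

lemma gen_fib_Suc: "gen_fib a b (Suc n) = gen_fib b (a + b) n"
  by (induction a b n rule: gen_fib.induct) simp_all

lemma gen_fib_numeral: "gen_fib a b (numeral k) = gen_fib b (a + b) (pred_numeral k)"
  by (simp only: numeral_eq_Suc gen_fib_Suc)

text \<open>Seeded with \<open>F\<^sub>0 = 0, F\<^sub>1 = 1\<close>, simp rewrites the values into \<open>Suc\<close>-terms and the
  evaluation becomes unary; from \<open>F\<^sub>3 = 2, F\<^sub>4 = 3\<close> on everything stays a numeral.\<close>

lemma fib_numeral_eq_gen_fib:
  assumes "3 \<le> (numeral k :: nat)"
  shows "fib (numeral k) = gen_fib 2 3 (numeral k - 3)"
proof -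
  have "fib (numeral k) = gen_fib (fib 3) (fib (Suc 3)) (numeral k - 3)"
    unfolding gen_fib_fib using assms by (metis le_add_diff_inverse)
  then show ?thesis
    by (simp add: eval_nat_numeral)
qed

function no_small_divisor :: "nat \<Rightarrow> nat \<Rightarrow> bool"
  where "no_small_divisor n d = (if n < d * d then True else \<not> d dvd n \<and> no_small_divisor n (Suc d))"
  by auto
termination
proof (relation "measure (\<lambda>(n, d). Suc n - d)")
  fix n d :: nat
  assume "\<not> n < d * d"
  then have "d \<le> n"
    by (metis le_square less_le_trans not_le)
  then show "((n, Suc d), n, d) \<in> measure (\<lambda>(n, d). Suc n - d)"
    by simp
qed simp

declare no_small_divisor.simps [simp del]

lemma no_small_divisor_dvd:
  assumes "no_small_divisor n d" "d \<le> e" "e * e \<le> n"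
  shows "\<not> e dvd n"
  using assms
proof (induction n d rule: no_small_divisor.induct)
  case (1 n d)
  have "d * d \<le> n"
    using "1.prems"(2,3) mult_le_mono order_trans by blast
  then have step: "\<not> d dvd n" "no_small_divisor n (Suc d)"
    using "1.prems"(1) no_small_divisor.simps[of n d] by auto
  show ?case
  proof (cases "e = d")
    case True
    with step show ?thesis
      by simp
  next
    case False
    with "1.prems"(2) have "Suc d \<le> e"
      by simp
    with "1.IH" \<open>d * d \<le> n\<close> step(2) "1.prems"(3) show ?thesis
      by simp
  qed
qed

lemma prime_if_no_small_divisor:
  assumes "1 < n" "no_small_divisor n 2"
  shows "prime n"
  unfolding prime_divisor_sqrt
proof (intro conjI allI impI)
  show "n \<noteq> 1"
    using assms(1) by simp
  fix d
  assume d: "d dvd n \<and> d\<^sup>2 \<le> n"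
  then have "d \<noteq> 0"
    using assms(1) by (auto intro: Nat.gr0I)
  moreover have "\<not> 2 \<le> d"
    using no_small_divisor_dvd[OF assms(2)] d by (auto simp: power2_eq_square)
  ultimately show "d = 1"
    by simp
qed

lemma prime_factorization_eqI:
  fixes n :: nat
  assumes "prod_mset A = n" "\<And>p. p \<in># A \<Longrightarrow> prime p"
  shows "prime_factorization n = A"
  using prime_factorization_prod_mset_primes[of A] assms by simp

lemma prime_factorization_fib:
  "prime_factorization (fib 4) = {#3#}"
  "prime_factorization (fib 6) = {#2, 2, 2#}"
  "prime_factorization (fib 8) = {#3, 7#}"
  "prime_factorization (fib 10) = {#5, 11#}"
  "prime_factorization (fib 12) = {#2, 2, 2, 2, 3, 3#}"
  "prime_factorization (fib 14) = {#13, 29#}"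
  "prime_factorization (fib 16) = {#3, 7, 47#}"
  "prime_factorization (fib 18) = {#2, 2, 2, 17, 19#}"
  "prime_factorization (fib 20) = {#3, 5, 11, 41#}"
  "prime_factorization (fib 22) = {#89, 199#}"
  "prime_factorization (fib 24) = {#2, 2, 2, 2, 2, 3, 3, 7, 23#}"
  "prime_factorization (fib 26) = {#233, 521#}"
  "prime_factorization (fib 28) = {#3, 13, 29, 281#}"
  "prime_factorization (fib 30) = {#2, 2, 2, 5, 11, 31, 61#}"
  "prime_factorization (fib 32) = {#3, 7, 47, 2207#}"
  "prime_factorization (fib 36) = {#2, 2, 2, 2, 3, 3, 3, 17, 19, 107#}"
  "prime_factorization (fib 40) = {#3, 5, 7, 11, 41, 2161#}"
  "prime_factorization (fib 44) = {#3, 43, 89, 199, 307#}"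
  "prime_factorization (fib 48) = {#2, 2, 2, 2, 2, 2, 3, 3, 7, 23, 47, 1103#}"
  "prime_factorization (fib 52) = {#3, 233, 521, 90481#}"
  "prime_factorization (fib 56) = {#3, 7, 7, 13, 29, 281, 14503#}"
  by (rule prime_factorization_eqI;
      auto simp del: prime_nat_numeral_eq
        simp add: fib_numeral_eq_gen_fib gen_fib_numeral prime_if_no_small_divisor no_small_divisor.simps)+

lemma fib_prime_factor_cofactor:
  fixes k m f :: nat
  assumes "even k" "4 \<le> k" "k \<le> 30" "m \<in> {k, k + 2, 2 * (k - 2)}"
    and "f \<in> prime_factors (fib m)" "k dvd f - 1"
  shows "(f - 1) div k \<in> {1, 2, 4, 9, 10, 20}"
proof -
  have "k \<in> {4, 6, 8, 10, 12, 14, 16, 18, 20, 22, 24, 26, 28, 30}"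
    using assms(1-3) by (auto elim!: evenE; presburger)
  then show ?thesis
    using assms(4-6) by (auto simp: prime_factorization_fib)
qed

lemma prime_mult_succ_not_dvd_fib:
  fixes k q m :: nat
  assumes "prime q" "q \<noteq> 2" "prime (k * q + 1)"
    and "even k" "4 \<le> k" "k \<le> 30" "m \<in> {k, k + 2, 2 * (k - 2)}"
  shows "\<not> k * q + 1 dvd fib m"
proof
  assume "k * q + 1 dvd fib m"
  moreover have "0 < m"
    using assms(5,7) by auto
  ultimately have "k * q + 1 \<in> prime_factors (fib m)"
    using assms(3) by (auto simp: in_prime_factors_iff fib_neq_0_nat)
  moreover have "k dvd (k * q + 1) - 1"
    by simp
  ultimately have "(k * q + 1 - 1) div k \<in> {1, 2, 4, 9, 10, 20}"
    by (rule fib_prime_factor_cofactor[OF assms(4-7)])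
  then have "q \<in> {1, 2, 4, 9, 10, 20}"
    using assms(5) by simp
  then show False
    using assms(1,2) by auto
qed

theorem theorem4p2:
  fixes q k :: nat
  assumes "prime q" and "odd q" and "q \<noteq> 5"
    and "2 \<le> k" and "k \<le> 31"
    and "prime (k * q + 1)"
    and "rank_app (k * q + 1) dvd pisano q"
  shows "k = 2"
proof (rule ccontr)
  assume "k \<noteq> 2"
  define p where "p = k * q + 1"
  have "q \<noteq> 2" "2 < q"
    using assms(1,2) prime_ge_2_nat[of q] by (auto simp: le_less)
  then have "6 < p"
    using assms(4) mult_le_mono[of 2 k 3 q] by (simp add: p_def)
  have p: "prime p" "p \<noteq> 2" "p \<noteq> 5"
    using assms(6) \<open>6 < p\<close> by (auto simp only: p_def)
  have "even k"
    using assms(2) p(1) \<open>6 < p\<close> prime_odd_nat[of p] by (auto simp: p_def)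
  have "rank_app p dvd k * q \<or> rank_app p dvd k * q + 2"
    using rank_app_prime_dvd[OF p] by (simp add: p_def)
  moreover have "rank_app p dvd q - 1 \<or> rank_app p dvd 2 * (q + 1)"
    using pisano_prime_dvd[OF assms(1) \<open>q \<noteq> 2\<close> assms(3)] assms(7) dvd_trans
    unfolding p_def by blast
  ultimately obtain m where m: "m \<in> {k, k + 2, 2 * (k - 2)}" "rank_app p dvd m"
    using dvd_mult_prime_cases[OF assms(1) \<open>2 < q\<close> assms(4)] by blast
  then have "p dvd fib m"
    using prime_dvd_fib_rank_app[OF p] fib_dvd_fib dvd_trans by blast
  moreover have "\<not> p dvd fib m"
    unfolding p_def
    using prime_mult_succ_not_dvd_fib[OF assms(1) \<open>q \<noteq> 2\<close> assms(6) \<open>even k\<close> _ _ m(1)]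
      assms(4,5) \<open>k \<noteq> 2\<close> \<open>even k\<close> by (auto elim!: evenE)
  ultimately show False
    by contradiction
qed

end
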